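(* Consider an instance of the Submodular Prophet Inequality problem with non-negative submodular objective $f:2^{\mathcal{U}}\to\mathbb{R}_{\ge0}$ and constraint $(\mathcal{N},\mathcal{I})$, and let $\mathcal{P}$ be a polyhedral relaxation of $(\mathcal{N},\mathcal{I})$. Then \[\max_{\bm{z}\in\mathcal{P}''} f^+(\bm{z})\ \ge\ \mathrm{OPT}.\]
   Context: Submodular Prophet Inequality instance: $\mathcal{N}=[n]$; independent random variables $X_1,\dots,X_n$, $X_i$ taking values in a finite set $\mathcal{U}_i$ with distribution $D_i$; the $\mathcal{U}_i$ are pairwise disjoint, $\mathcal{U}=\bigcup_i\mathcal{U}_i$, $\mathcal{D}(e)=D_i(e)=\Pr[X_i=e]$ for $e\in\mathcal{U}_i$; $f$ is non-negative submodular ($f(A)+f(B)\ge f(A\cup B)+f(A\cap B)$, $f(\emptyset)=0$); $\mathcal{I}\subseteq2^{\mathcal{N}}$ is downward-closed. Prophet's value $\mathrm{OPT}=\mathbb{E}[\max_{T\in\mathcal{I}}f(\{X_i:i\in T\})]$. A polyhedral relaxation is a convex polytope $\mathcal{P}\subseteq[0,1]^{\mathcal{N}}$ containing $\mathbf{1}_T$ for all $T\in\mathcal{I}$. $\mathcal{P}'=\{\bm{y}\in[0,1]^{\mathcal{U}}:\exists\bm{x}\in\mathcal{P},\ \sum_{e\in\mathcal{U}_i}y_e=x_i\ \forall i\}$, $\mathcal{P}''=\{\bm{z}\in\mathcal{P}':z_e\le\mathcal{D}(e)\ \forall e\in\mathcal{U}\}$. Concave closure: $f^+(\bm{z})=\max\{\sum_{S\subseteq\mathcal{U}}a_Sf(S):a_S\ge0,\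 \sum_Sa_S=1,\ \sum_Sa_S\mathbf{1}_S=\bm{z}\}$. *)

theory Defs
  imports "HOL-Analysis.Analysis" "HOL-Probability.Product_PMF"
begin

text \<open>Ground set N is the finite type 'n (N = UNIV); the universe U of all
  possible realisations is the finite type 'u (U = UNIV), partitioned into the
  disjoint sets Us i (i in N).\<close>

definition submodular :: "('u set \<Rightarrow> real) \<Rightarrow> bool" where
  "submodular f \<longleftrightarrow> (\<forall>A B. f A + f B \<ge> f (A \<union> B) + f (A \<inter> B))"

definition downward_closed :: "'n set set \<Rightarrow> bool" where
  "downward_closed I \<longleftrightarrow> (\<forall>T \<in> I. \<forall>S. S \<subseteq> T \<longrightarrow> S \<in> I)"

definition indic_vec :: "'a set \<Rightarrow> real ^ ('a::finite)" where
  "indic_vec T = (\<chi> i. if i \<in> T then 1 else 0)"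

definition unit_cube :: "(real ^ ('a::finite)) set" where
  "unit_cube = {x. \<forall>i. 0 \<le> x $ i \<and> x $ i \<le> 1}"

definition polyhedral_relaxation :: "(real ^ ('n::finite)) set \<Rightarrow> 'n set set \<Rightarrow> bool" where
  "polyhedral_relaxation P I \<longleftrightarrow>
     polytope P \<and> P \<subseteq> unit_cube \<and> (\<forall>T \<in> I. indic_vec T \<in> P)"

definition P' :: "(real ^ ('n::finite)) set \<Rightarrow> ('n \<Rightarrow> ('u::finite) set) \<Rightarrow> (real ^ 'u) set" where
  "P' P Us = {y \<in> unit_cube. \<exists>x \<in> P. \<forall>i. (\<Sum>e \<in> Us i. y $ e) = x $ i}"

definition Dist :: "('n \<Rightarrow> 'u set) \<Rightarrow> ('n \<Rightarrow> 'u pmf) \<Rightarrow> 'u \<Rightarrow> real" where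
  "Dist Us D e = pmf (D (THE i. e \<in> Us i)) e"

definition P'' :: "(real ^ ('n::finite)) set \<Rightarrow> ('n \<Rightarrow> ('u::finite) set) \<Rightarrow> ('n \<Rightarrow> 'u pmf) \<Rightarrow> (real ^ 'u) set" where
  "P'' P Us D = {z \<in> P' P Us. \<forall>e. z $ e \<le> Dist Us D e}"

text \<open>Concave closure f^+ (the maximum exists; Sup is used to denote it).\<close>
definition concave_closure :: "(('u::finite) set \<Rightarrow> real) \<Rightarrow> real ^ 'u \<Rightarrow> real" where
  "concave_closure f z = Sup {(\<Sum>S\<in>UNIV. a S * f S) | a.
      (\<forall>S. a S \<ge> 0) \<and> (\<Sum>S\<in>UNIV. a S) = 1 \<and> (\<Sum>S\<in>UNIV. a S *\<^sub>R indic_vec S) = z}"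

definition prophet_OPT :: "('u set \<Rightarrow> real) \<Rightarrow> ('n::finite) set set \<Rightarrow> ('n \<Rightarrow> 'u pmf) \<Rightarrow> real" where
  "prophet_OPT f I D = measure_pmf.expectation (Pi_pmf UNIV undefined D)
      (\<lambda>X. Max ((\<lambda>T. f (X ` T)) ` I))"

end

theory Submission
  imports Defs
begin

text \<open>Let the prophet, seeing the realisation X, pick an optimal T(X) \<in> I, and let W be the
  law of the random set X(T(X)) \<subseteq> U. Its marginal vector z, z_e = Pr[e \<in> X(T(X))], is the
  point we need. Mixing the indicators of T(X) by the law of X gives a point x \<in> P; since
  X_i \<in> U_i and the U_i are disjoint, X(T(X)) meets U_i exactly in X_i when i \<in> T(X) and not
  at all otherwise, so the z_e with e \<in> U_i sum to x_i, and z_e \<le> Pr[X_i = e] = \<D>(e).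
  Finally the weights of W are admissible in the definition of f^+(z), which gives
  f^+(z) \<ge> E[f(X(T(X)))] = OPT.\<close>

definition marginal :: "('a::finite) set pmf \<Rightarrow> real ^ 'a" where
  "marginal W = (\<Sum>S\<in>UNIV. pmf W S *\<^sub>R indic_vec S)"

lemma marginal_nth: "marginal W $ e = measure_pmf.prob W {S. e \<in> S}"
proof -
  have "marginal W $ e = (\<Sum>S\<in>UNIV. pmf W S * (if e \<in> S then 1 else 0))"
    unfolding marginal_def indic_vec_def by simp
  also have "\<dots> = (\<Sum>S\<in>UNIV. if e \<in> S then pmf W S else 0)"
    by (intro sum.cong) auto
  also have "\<dots> = (\<Sum>S\<in>{S. e \<in> S}. pmf W S)"
    by (simp add: sum.inter_filter[symmetric])
  finally show ?thesis by (simp add: measure_measure_pmf_finite)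
qed

lemma marginal_in_unit_cube: "marginal W \<in> unit_cube"
  unfolding unit_cube_def by (simp add: marginal_nth)

lemma sum_marginal_eq_expectation_card:
  "(\<Sum>e\<in>A. marginal W $ e) = measure_pmf.expectation W (\<lambda>S. real (card (A \<inter> S)))"
proof -
  have card_eq: "(\<Sum>e\<in>A. if e \<in> S then 1 else 0) = real (card (A \<inter> S))" for S
    by (simp add: sum.If_cases Int_def)
  have "(\<Sum>e\<in>A. marginal W $ e) = (\<Sum>S\<in>UNIV. pmf W S * (\<Sum>e\<in>A. if e \<in> S then 1 else 0))"
    unfolding marginal_def indic_vec_def by (simp add: sum.swap[of _ A] sum_distrib_left)
  also have "\<dots> = measure_pmf.expectation W (\<lambda>S. real (card (A \<inter> S)))"
    unfolding card_eq by (subst integral_measure_pmf_real[where A = UNIV]) (auto simp: mult.commute)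
  finally show ?thesis .
qed

lemma marginal_in_convex:
  assumes "convex C" and "\<And>S. S \<in> set_pmf W \<Longrightarrow> indic_vec S \<in> C"
  shows "marginal W \<in> C"
proof -
  have "marginal W = (\<Sum>S\<in>set_pmf W. pmf W S *\<^sub>R indic_vec S)"
    unfolding marginal_def by (rule sum.mono_neutral_right) (auto simp: set_pmf_eq)
  also have "\<dots> \<in> C"
    using assms by (intro convex_sum) (auto simp: sum_pmf_eq_1)
  finally show ?thesis .
qed

lemma convex_combination_le_concave_closure:
  fixes f :: "('u::finite) set \<Rightarrow> real"
  assumes "\<And>S. a S \<ge> 0" and "(\<Sum>S\<in>UNIV. a S) = 1" and "(\<Sum>S\<in>UNIV. a S *\<^sub>R indic_vec S) = z"
  shows "(\<Sum>S\<in>UNIV. a S * f S) \<le> concave_closure f z"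
proof -
  let ?C = "{(\<Sum>S\<in>UNIV. b S * f S) | b. (\<forall>S. b S \<ge> 0) \<and> (\<Sum>S\<in>UNIV. b S) = 1
              \<and> (\<Sum>S\<in>UNIV. b S *\<^sub>R indic_vec S) = z}"
  have bdd: "bdd_above ?C"
  proof (rule bdd_aboveI)
    fix v assume "v \<in> ?C"
    then obtain b where b: "\<forall>S. b S \<ge> 0" "(\<Sum>S\<in>UNIV. b S) = 1" and v: "v = (\<Sum>S\<in>UNIV. b S * f S)"
      by blast
    have "v \<le> (\<Sum>S\<in>UNIV. b S * Max (range f))"
      unfolding v using b by (intro sum_mono mult_left_mono) auto
    also have "\<dots> = Max (range f)"
      using b by (simp add: sum_distrib_right[symmetric])
    finally show "v \<le> Max (range f)" .
  qed
  have "(\<Sum>S\<in>UNIV. a S * f S) \<in> ?C"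
    using assms by blast
  then show ?thesis
    unfolding concave_closure_def using bdd by (rule cSup_upper)
qed

lemma expectation_le_concave_closure_marginal:
  fixes f :: "('u::finite) set \<Rightarrow> real"
  shows "measure_pmf.expectation W f \<le> concave_closure f (marginal W)"
proof -
  have "measure_pmf.expectation W f = (\<Sum>S\<in>UNIV. pmf W S * f S)"
    by (subst integral_measure_pmf_real[where A = UNIV]) (auto simp: mult.commute)
  also have "\<dots> \<le> concave_closure f (marginal W)"
    by (rule convex_combination_le_concave_closure) (auto simp: sum_pmf_eq_1 marginal_def)
  finally show ?thesis .
qed

lemma part_inter_image:
  assumes disj: "\<And>i j. i \<noteq> j \<Longrightarrow> Us i \<inter> Us j = {}" and X: "\<And>j. X j \<in> Us j"
  shows "Us i \<inter> X ` T = (if i \<in> T then {X i} else {})"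
proof -
  have "j = i" if "X j \<in> Us i" for j
    using X[of j] disj[of j i] that by blast
  then show ?thesis
    using X[of i] by auto
qed

lemma Dist_eq_pmf:
  assumes "\<And>i j. i \<noteq> j \<Longrightarrow> Us i \<inter> Us j = {}" and "e \<in> Us i"
  shows "Dist Us D e = pmf (D i) e"
proof -
  have "(THE i. e \<in> Us i) = i"
    using assms by (intro the_equality) auto
  then show ?thesis
    unfolding Dist_def by simp
qed

lemma prob_Pi_pmf_component:
  "measure_pmf.prob (Pi_pmf (UNIV :: ('n::finite) set) dflt D) {X. X i = e} = pmf (D i) e"
proof -
  have "measure_pmf.prob (Pi_pmf UNIV dflt D) {X. X i = e}
          = measure_pmf.prob (map_pmf (\<lambda>X. X i) (Pi_pmf UNIV dflt D)) {e}"
    by (simp add: vimage_def)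
  then show ?thesis
    by (simp add: Pi_pmf_component measure_pmf_single)
qed

lemma set_Pi_pmf_in_parts:
  assumes "\<And>i. set_pmf (D i) \<subseteq> Us i" and "X \<in> set_pmf (Pi_pmf (UNIV :: ('n::finite) set) dflt D)"
  shows "X i \<in> Us i"
  using set_Pi_pmf_subset'[of "UNIV :: 'n set" dflt D] assms unfolding PiE_dflt_def by force

lemma sum_marginal_image_part:
  assumes disj: "\<And>i j. i \<noteq> j \<Longrightarrow> Us i \<inter> Us j = {}"
    and parts: "\<And>X j. X \<in> set_pmf Q \<Longrightarrow> X j \<in> Us j"
  shows "(\<Sum>e\<in>Us i. marginal (map_pmf (\<lambda>X. X ` T X) Q) $ e) = marginal (map_pmf T Q) $ i"
proof -
  have "card (Us i \<inter> X ` T X) = card ({i} \<inter> T X)" if "X \<in> set_pmf Q" for X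
    using part_inter_image[of Us X, OF disj parts[OF that]] by simp
  then have "measure_pmf.expectation Q (\<lambda>X. real (card (Us i \<inter> X ` T X)))
               = measure_pmf.expectation Q (\<lambda>X. real (card ({i} \<inter> T X)))"
    by (intro integral_cong_AE) (auto simp: AE_measure_pmf_iff)
  then have "(\<Sum>e\<in>Us i. marginal (map_pmf (\<lambda>X. X ` T X) Q) $ e)
              = (\<Sum>j\<in>{i}. marginal (map_pmf T Q) $ j)"
    unfolding sum_marginal_eq_expectation_card by (simp only: integral_map_pmf)
  then show ?thesis
    by simp
qed

lemma marginal_image_le_prob_component:
  assumes disj: "\<And>i j. i \<noteq> j \<Longrightarrow> Us i \<inter> Us j = {}"
    and parts: "\<And>X j. X \<in> set_pmf Q \<Longrightarrow> X j \<in> Us j"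
    and e: "e \<in> Us i"
  shows "marginal (map_pmf (\<lambda>X. X ` T X) Q) $ e \<le> measure_pmf.prob Q {X. X i = e}"
proof -
  have sub: "{X. e \<in> X ` T X} \<inter> set_pmf Q \<subseteq> {X. X i = e}"
  proof
    fix X assume X: "X \<in> {X. e \<in> X ` T X} \<inter> set_pmf Q"
    then have "Us i \<inter> X ` T X \<subseteq> {X i}"
      using part_inter_image[of Us X, OF disj parts[of X]] by simp
    moreover have "e \<in> Us i \<inter> X ` T X"
      using X e by simp
    ultimately show "X \<in> {X. X i = e}"
      by auto
  qed
  have "marginal (map_pmf (\<lambda>X. X ` T X) Q) $ e = measure_pmf.prob Q {X. e \<in> X ` T X}"
    by (simp add: marginal_nth vimage_def)
  also have "\<dots> = measure_pmf.prob Q ({X. e \<in> X ` T X} \<inter> set_pmf Q)"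
    by (simp add: measure_Int_set_pmf)
  also have "\<dots> \<le> measure_pmf.prob Q {X. X i = e}"
    using sub by (rule measure_pmf.finite_measure_mono) simp
  finally show ?thesis .
qed

text \<open>The selection rule T may look at the whole realisation X: no online constraint is
  needed for the point to lie in P''.\<close>

lemma marginal_selection_in_P'':
  fixes Us :: "('n::finite) \<Rightarrow> ('u::finite) set" and D :: "'n \<Rightarrow> 'u pmf"
    and T :: "('n \<Rightarrow> 'u) \<Rightarrow> 'n set"
  defines "Q \<equiv> Pi_pmf UNIV undefined D"
  assumes disj: "\<And>i j. i \<noteq> j \<Longrightarrow> Us i \<inter> Us j = {}"
    and cover: "(\<Union>i. Us i) = UNIV"
    and supp: "\<And>i. set_pmf (D i) \<subseteq> Us i"
    and relax: "polyhedral_relaxation P I"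
    and T: "\<And>X. T X \<in> I"
  shows "marginal (map_pmf (\<lambda>X. X ` T X) Q) \<in> P'' P Us D"
proof -
  have parts: "X \<in> set_pmf Q \<Longrightarrow> X i \<in> Us i" for X i
    unfolding Q_def using supp by (rule set_Pi_pmf_in_parts)
  have "marginal (map_pmf T Q) \<in> P"
    using relax T by (intro marginal_in_convex) (auto simp: polyhedral_relaxation_def polytope_imp_convex)
  moreover have "marginal (map_pmf (\<lambda>X. X ` T X) Q) $ e \<le> Dist Us D e" for e
  proof -
    obtain i where i: "e \<in> Us i"
      using cover by auto
    have "marginal (map_pmf (\<lambda>X. X ` T X) Q) $ e \<le> measure_pmf.prob Q {X. X i = e}"
      using disj parts i by (rule marginal_image_le_prob_component)
    also have "\<dots> = Dist Us D e"
      unfolding Q_def prob_Pi_pmf_component using disj i by (rule Dist_eq_pmf[symmetric])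
    finally show ?thesis .
  qed
  moreover have "(\<Sum>e\<in>Us i. marginal (map_pmf (\<lambda>X. X ` T X) Q) $ e) = marginal (map_pmf T Q) $ i"
    for i
    using disj parts by (rule sum_marginal_image_part)
  ultimately show ?thesis
    unfolding P''_def P'_def by (auto intro: marginal_in_unit_cube)
qed

lemma prophet_OPT_attained:
  fixes f :: "('u::finite) set \<Rightarrow> real" and I :: "('n::finite) set set"
  assumes "I \<noteq> {}"
  obtains T where "\<And>X. T X \<in> I"
    and "prophet_OPT f I D = measure_pmf.expectation (map_pmf (\<lambda>X. X ` T X) (Pi_pmf UNIV undefined D)) f"
proof -
  have "\<exists>T\<in>I. f (X ` T) = Max ((\<lambda>T. f (X ` T)) ` I)" for X :: "'n \<Rightarrow> 'u"
  proof -
    have "Max ((\<lambda>T. f (X ` T)) ` I) \<in> (\<lambda>T. f (X ` T)) ` I"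
      using assms by (intro Max_in) auto
    then show ?thesis
      by force
  qed
  then obtain T where T_in: "\<And>X. T X \<in> I"
    and T_max: "\<And>X. f (X ` T X) = Max ((\<lambda>T. f (X ` T)) ` I)"
    by metis
  show ?thesis
    by (rule that[of T, OF T_in]) (simp add: prophet_OPT_def T_max)
qed

theorem claim1:
  fixes f :: "('u::finite) set \<Rightarrow> real"
    and I :: "('n::finite) set set"
    and Us :: "'n \<Rightarrow> 'u set"
    and D :: "'n \<Rightarrow> 'u pmf"
    and P :: "(real ^ 'n) set"
  assumes disj: "\<And>i j. i \<noteq> j \<Longrightarrow> Us i \<inter> Us j = {}"
    and cover: "(\<Union>i. Us i) = UNIV"
    and supp: "\<And>i. set_pmf (D i) \<subseteq> Us i"
    and nonneg: "\<And>A. f A \<ge> 0"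
    and f_empty: "f {} = 0"
    and submod: "submodular f"
    and dc: "downward_closed I"
    and I_nonempty: "{} \<in> I"
    and relax: "polyhedral_relaxation P I"
  shows "\<exists>z \<in> P'' P Us D. concave_closure f z \<ge> prophet_OPT f I D"
proof -
  have "I \<noteq> {}"
    using I_nonempty by blast
  then obtain T where T: "\<And>X. T X \<in> I"
    and OPT: "prophet_OPT f I D = measure_pmf.expectation (map_pmf (\<lambda>X. X ` T X) (Pi_pmf UNIV undefined D)) f"
    using prophet_OPT_attained by blast
  let ?z = "marginal (map_pmf (\<lambda>X. X ` T X) (Pi_pmf UNIV undefined D))"
  have "?z \<in> P'' P Us D"
    using disj cover supp relax T by (rule marginal_selection_in_P'')
  moreover have "concave_closure f ?z \<ge> prophet_OPT f I D"
    unfolding OPT by (rule expectation_le_concave_closure_marginal)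
  ultimately show ?thesis by blast
qed

end
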